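(* Let $\{\psi_j\}_{j=1}^N$ be an orthonormal system in $\ell^2(\mathbb Z)$. Then $$\sum_{n\in\mathbb Z}\Big(\sum_{j=1}^N|\psi_j(n)|^2\Big)^3\le\sum_{j=1}^N\sum_{n\in\mathbb Z}|D\psi_j(n)|^2,$$ where $D\psi(n)=\psi(n+1)-\psi(n)$. *)

theory Defs
  imports "HOL-Analysis.Analysis"
begin

definition in_l2 :: "(int \<Rightarrow> complex) \<Rightarrow> bool" where
  "in_l2 f \<longleftrightarrow> (\<lambda>n. (norm (f n))^2) summable_on UNIV"

definition l2_inner :: "(int \<Rightarrow> complex) \<Rightarrow> (int \<Rightarrow> complex) \<Rightarrow> complex" where
  "l2_inner f g = (\<Sum>\<^sub>\<infinity>n. f n * cnj (g n))"

definition Dfwd :: "(int \<Rightarrow> complex) \<Rightarrow> int \<Rightarrow> complex" where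
  "Dfwd f n = f (n + 1) - f n"

end

theory Submission
  imports Defs
begin

text \<open>
  Let \<open>\<rho> = \<Sum>\<^sub>j |\<psi>\<^sub>j|\<^sup>2\<close> and, for each \<open>n\<close>, let \<open>G\<^sub>n = \<Sum>\<^sub>j conj (\<psi>\<^sub>j n) \<psi>\<^sub>j\<close>. By orthonormality
  \<open>\<parallel>G\<^sub>n\<parallel>\<^sup>2 = \<rho> n = G\<^sub>n n\<close>, so the discrete Agmon inequality \<open>|g n|\<^sup>4 \<le> \<parallel>g\<parallel>\<^sup>2 \<parallel>D g\<parallel>\<^sup>2\<close>
  applied to \<open>G\<^sub>n\<close> gives \<open>\<rho> n\<^sup>3 \<le> \<parallel>D G\<^sub>n\<parallel>\<^sup>2\<close>. Summing over \<open>n\<close> and using Parseval in the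
  variable \<open>n\<close> for fixed \<open>m\<close>, \<open>\<Sum>\<^sub>n |D G\<^sub>n m|\<^sup>2 = \<Sum>\<^sub>j |D \<psi>\<^sub>j m|\<^sup>2\<close>, yields the claim.
\<close>

definition l2_sqnorm :: "(int \<Rightarrow> complex) \<Rightarrow> real" where
  "l2_sqnorm f = (\<Sum>\<^sub>\<infinity>n. (norm (f n))^2)"

definition l2_orthonormal :: "'i set \<Rightarrow> ('i \<Rightarrow> int \<Rightarrow> complex) \<Rightarrow> bool" where
  "l2_orthonormal J \<psi> \<longleftrightarrow> (\<forall>j\<in>J. in_l2 (\<psi> j))
     \<and> (\<forall>j\<in>J. \<forall>k\<in>J. l2_inner (\<psi> j) (\<psi> k) = (if j = k then 1 else 0))"

definition l2_density :: "'i set \<Rightarrow> ('i \<Rightarrow> int \<Rightarrow> complex) \<Rightarrow> int \<Rightarrow> real" where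
  "l2_density J \<psi> n = (\<Sum>j\<in>J. (norm (\<psi> j n))^2)"

definition projection_kernel :: "'i set \<Rightarrow> ('i \<Rightarrow> int \<Rightarrow> complex) \<Rightarrow> int \<Rightarrow> int \<Rightarrow> complex" where
  "projection_kernel J \<psi> n m = (\<Sum>j\<in>J. cnj (\<psi> j n) * \<psi> j m)"

lemma has_sum_sum:
  fixes f :: "'i \<Rightarrow> 'a \<Rightarrow> 'b::topological_comm_monoid_add"
  assumes "finite I" "\<And>i. i \<in> I \<Longrightarrow> (f i has_sum s i) A"
  shows "((\<lambda>x. \<Sum>i\<in>I. f i x) has_sum (\<Sum>i\<in>I. s i)) A"
  using assms by (induction I rule: finite_induct) (auto intro: has_sum_add)

lemma finite_ge_of_summable_on:
  fixes f :: "'a \<Rightarrow> real"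
  assumes summable: "f summable_on UNIV" and nonneg: "\<And>x. 0 \<le> f x" and "e > 0"
  shows "finite {x. e \<le> f x}"
proof (rule ccontr)
  assume "infinite {x. e \<le> f x}"
  then obtain B where B: "finite B" "card B = nat \<lceil>(\<Sum>\<^sub>\<infinity>x. f x) / e\<rceil> + 1" "B \<subseteq> {x. e \<le> f x}"
    using infinite_arbitrarily_large by meson
  have "real (card B) * e = (\<Sum>x\<in>B. e)" by simp
  also have "\<dots> \<le> (\<Sum>x\<in>B. f x)" using B(3) by (intro sum_mono) auto
  also have "\<dots> \<le> (\<Sum>\<^sub>\<infinity>x. f x)" using B(1) summable nonneg by (intro finite_sum_le_infsum) auto
  finally have "real (card B) \<le> (\<Sum>\<^sub>\<infinity>x. f x) / e" using \<open>e > 0\<close> by (simp add: field_simps)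
  with B(2) show False by linarith
qed

lemma norm_add_sq_le:
  fixes a b :: "'a::real_normed_vector"
  shows "(norm (a + b))^2 \<le> 2 * (norm a)^2 + 2 * (norm b)^2"
proof -
  have "(norm (a + b))^2 \<le> (norm a + norm b)^2"
    by (intro power_mono norm_triangle_ineq) simp
  also have "\<dots> \<le> 2 * (norm a)^2 + 2 * (norm b)^2"
    using sum_squares_bound[of "norm a" "norm b"] by (simp add: power2_sum)
  finally show ?thesis .
qed

lemma norm_sq_diff_le:
  fixes x y :: "'a::real_normed_vector"
  shows "\<bar>(norm x)^2 - (norm y)^2\<bar> \<le> norm (x - y) * (norm x + norm y)"
proof -
  have "(norm x)^2 - (norm y)^2 = (norm x - norm y) * (norm x + norm y)"
    by (simp add: power2_eq_square algebra_simps)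
  then have "\<bar>(norm x)^2 - (norm y)^2\<bar> = \<bar>norm x - norm y\<bar> * (norm x + norm y)"
    by (simp add: abs_mult)
  also have "\<dots> \<le> norm (x - y) * (norm x + norm y)"
    by (intro mult_right_mono norm_triangle_ineq3) simp
  finally show ?thesis .
qed

lemma in_l2_add: "in_l2 f \<Longrightarrow> in_l2 g \<Longrightarrow> in_l2 (\<lambda>n. f n + g n)"
  unfolding in_l2_def
  by (rule summable_on_comparison_test[where f = "\<lambda>n. 2 * (norm (f n))^2 + 2 * (norm (g n))^2"])
    (auto intro: summable_on_add summable_on_cmult_right norm_add_sq_le)

lemma in_l2_cmult: "in_l2 f \<Longrightarrow> in_l2 (\<lambda>n. c * f n)"
  unfolding in_l2_def
  using summable_on_cmult_right[of "\<lambda>n. (norm (f n))^2" UNIV "(norm c)^2"]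
  by (simp add: norm_mult power_mult_distrib)

lemma in_l2_sum: "finite I \<Longrightarrow> (\<And>i. i \<in> I \<Longrightarrow> in_l2 (f i)) \<Longrightarrow> in_l2 (\<lambda>n. \<Sum>i\<in>I. f i n)"
proof (induction I rule: finite_induct)
  case empty
  then show ?case by (simp add: in_l2_def)
next
  case (insert i I)
  then show ?case by (simp add: in_l2_add)
qed

lemma in_l2_shift: "in_l2 f \<Longrightarrow> in_l2 (\<lambda>n. f (n + 1))"
  unfolding in_l2_def
  by (subst summable_on_reindex_bij_witness[where i = "\<lambda>n. n - 1" and j = "\<lambda>n. n + 1"]) simp_all

lemma in_l2_Dfwd: "in_l2 f \<Longrightarrow> in_l2 (Dfwd f)"
  using in_l2_add[OF in_l2_shift in_l2_cmult[of f "-1"]]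
  by (simp add: Dfwd_def[abs_def])

lemma has_sum_l2_inner:
  assumes "in_l2 f" "in_l2 g"
  shows "((\<lambda>n. f n * cnj (g n)) has_sum l2_inner f g) UNIV"
proof -
  have "(\<lambda>n. norm (f n * cnj (g n))) summable_on UNIV"
  proof (rule summable_on_comparison_test)
    show "(\<lambda>n. (norm (f n))^2 + (norm (g n))^2) summable_on UNIV"
      using assms unfolding in_l2_def by (rule summable_on_add)
    show "norm (f n * cnj (g n)) \<le> (norm (f n))^2 + (norm (g n))^2" for n
    proof -
      have "0 \<le> norm (f n) * norm (g n)" by simp
      then show ?thesis
        using sum_squares_bound[of "norm (f n)" "norm (g n)"] unfolding norm_mult complex_mod_cnj
        by linarith
    qed
  qed simp
  then show ?thesis
    unfolding l2_inner_def by (intro has_sum_infsum) (rule abs_summable_summable)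
qed

lemma sum_shifted_le_l2_sqnorm:
  assumes "in_l2 g"
  shows "(\<Sum>i<K. (norm (g (c + int i)))^2) \<le> l2_sqnorm g"
proof -
  have "inj_on (\<lambda>i. c + int i) {..<K}" by (auto simp: inj_on_def)
  then have "(\<Sum>i<K. (norm (g (c + int i)))^2) = (\<Sum>n\<in>(\<lambda>i. c + int i) ` {..<K}. (norm (g n))^2)"
    by (simp add: sum.reindex)
  also have "\<dots> \<le> l2_sqnorm g"
    using assms unfolding in_l2_def l2_sqnorm_def by (intro finite_sum_le_infsum) auto
  finally show ?thesis .
qed

lemma in_l2_small_on_both_sides:
  assumes "in_l2 g" "e > 0"
  obtains a b where "a < n" "n < b" "(norm (g a))^2 < e" "(norm (g b))^2 < e"
proof -
  have fin: "finite {m. e \<le> (norm (g m))^2}"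
    using assms unfolding in_l2_def by (intro finite_ge_of_summable_on) auto
  obtain a where "a < n" "\<not> e \<le> (norm (g a))^2"
    using finite_subset[OF _ fin] infinite_Iio[of n] by blast
  moreover obtain b where "n < b" "\<not> e \<le> (norm (g b))^2"
    using finite_subset[OF _ fin] infinite_Ioi[of n] by blast
  ultimately show ?thesis using that by (simp add: not_le)
qed

text \<open>\<open>|f k|\<^sup>2 - |f 0|\<^sup>2\<close> and \<open>|f k|\<^sup>2 - |f K|\<^sup>2\<close> telescope over the disjoint ranges
  \<open>[0, k)\<close> and \<open>[k, K)\<close>.\<close>

lemma twice_norm_sq_le_sum_increments:
  fixes f :: "nat \<Rightarrow> 'a::real_normed_vector"
  assumes "k \<le> K"
  shows "2 * (norm (f k))^2 - (norm (f 0))^2 - (norm (f K))^2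
    \<le> (\<Sum>i<K. norm (f (Suc i) - f i) * (norm (f i) + norm (f (Suc i))))"
proof -
  define D where "D i = (norm (f (Suc i)))^2 - (norm (f i))^2" for i
  have split: "(\<Sum>i<K. h i) = (\<Sum>i<k. h i) + (\<Sum>i\<in>{k..<K}. h i)" for h :: "nat \<Rightarrow> real"
    using assms by (metis atLeast0LessThan le0 sum.atLeastLessThan_concat)
  have "(\<Sum>i<k. D i) = (norm (f k))^2 - (norm (f 0))^2" "(\<Sum>i<K. D i) = (norm (f K))^2 - (norm (f 0))^2"
    unfolding D_def by (rule sum_lessThan_telescope)+
  then have "2 * (norm (f k))^2 - (norm (f 0))^2 - (norm (f K))^2 = (\<Sum>i<k. D i) - (\<Sum>i\<in>{k..<K}. D i)"
    using split[of D] by simp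
  also have "\<dots> \<le> (\<Sum>i<k. \<bar>D i\<bar>) + (\<Sum>i\<in>{k..<K}. \<bar>D i\<bar>)"
    using sum_abs[of D "{..<k}"] sum_abs[of D "{k..<K}"] by linarith
  also have "\<dots> = (\<Sum>i<K. \<bar>D i\<bar>)" by (simp add: split)
  also have "\<dots> \<le> (\<Sum>i<K. norm (f (Suc i) - f i) * (norm (f i) + norm (f (Suc i))))"
    unfolding D_def using norm_sq_diff_le[of "f (Suc i)" "f i" for i]
    by (intro sum_mono) (simp only: add.commute)
  finally show ?thesis .
qed

lemma sum_increments_le_l2_sqnorm:
  assumes g: "in_l2 g"
  shows "(\<Sum>i<K. norm (Dfwd g (c + int i)) * (norm (g (c + int i)) + norm (g (c + int (Suc i)))))
    \<le> 2 * sqrt (l2_sqnorm g) * sqrt (l2_sqnorm (Dfwd g))"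
proof -
  define d where "d i = norm (Dfwd g (c + int i))" for i
  define u where "u i = norm (g (c + int i))" for i
  have "(\<Sum>i<K. (u i + u (Suc i))^2) \<le> (\<Sum>i<K. 2 * (u i)^2 + 2 * (u (Suc i))^2)"
    by (intro sum_mono) (use norm_add_sq_le[of "u i" "u (Suc i)" for i] in simp)
  also have "\<dots> = 2 * (\<Sum>i<K. (u i)^2) + 2 * (\<Sum>i<K. (u (Suc i))^2)"
    by (simp add: sum.distrib sum_distrib_left)
  also have "\<dots> \<le> 4 * l2_sqnorm g"
    using sum_shifted_le_l2_sqnorm[OF g, where K = K and c = c]
      sum_shifted_le_l2_sqnorm[OF g, where K = K and c = "c + 1"]
    unfolding u_def by (simp add: add_ac)
  finally have u_bound: "(\<Sum>i<K. (u i + u (Suc i))^2) \<le> 4 * l2_sqnorm g" .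
  have d_bound: "(\<Sum>i<K. (d i)^2) \<le> l2_sqnorm (Dfwd g)"
    unfolding d_def by (rule sum_shifted_le_l2_sqnorm[OF in_l2_Dfwd[OF g]])
  have "(\<Sum>i<K. d i * (u i + u (Suc i)))^2 \<le> (\<Sum>i<K. (d i)^2) * (\<Sum>i<K. (u i + u (Suc i))^2)"
    by (rule Cauchy_Schwarz_ineq_sum)
  also have "\<dots> \<le> l2_sqnorm (Dfwd g) * (4 * l2_sqnorm g)"
    using d_bound u_bound by (intro mult_mono) (auto simp: l2_sqnorm_def intro: infsum_nonneg sum_nonneg)
  finally have "(\<Sum>i<K. d i * (u i + u (Suc i))) \<le> sqrt (l2_sqnorm (Dfwd g) * (4 * l2_sqnorm g))"
    by (rule real_le_rsqrt)
  then show ?thesis unfolding d_def u_def by (simp add: real_sqrt_mult mult_ac)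
qed

text \<open>Discrete Agmon inequality: telescope from two points \<open>a < n < b\<close> where \<open>|g|\<^sup>2 < \<epsilon>\<close>.\<close>

lemma norm_sq_le_l2_sqnorm_Dfwd:
  assumes g: "in_l2 g"
  shows "(norm (g n))^2 \<le> sqrt (l2_sqnorm g) * sqrt (l2_sqnorm (Dfwd g))"
proof (rule field_le_epsilon)
  fix e :: real assume "e > 0"
  with g obtain a b where ab: "a < n" "n < b" "(norm (g a))^2 < e" "(norm (g b))^2 < e"
    by (rule in_l2_small_on_both_sides)
  define f where "f i = g (a + int i)" for i
  have "2 * (norm (f (nat (n - a))))^2 - (norm (f 0))^2 - (norm (f (nat (b - a))))^2
    \<le> (\<Sum>i<nat (b - a). norm (f (Suc i) - f i) * (norm (f i) + norm (f (Suc i))))"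
    using ab by (intro twice_norm_sq_le_sum_increments) simp
  also have "\<dots> \<le> 2 * sqrt (l2_sqnorm g) * sqrt (l2_sqnorm (Dfwd g))"
    using sum_increments_le_l2_sqnorm[OF g, where K = "nat (b - a)" and c = a]
    unfolding f_def Dfwd_def by (simp add: add_ac)
  finally show "(norm (g n))^2 \<le> sqrt (l2_sqnorm g) * sqrt (l2_sqnorm (Dfwd g)) + e"
    using ab unfolding f_def by simp
qed

lemma norm_pow4_le_l2_sqnorm_Dfwd:
  assumes "in_l2 g"
  shows "(norm (g n))^4 \<le> l2_sqnorm g * l2_sqnorm (Dfwd g)"
proof -
  have "((norm (g n))^2)^2 \<le> (sqrt (l2_sqnorm g) * sqrt (l2_sqnorm (Dfwd g)))^2"
    using norm_sq_le_l2_sqnorm_Dfwd[OF assms] by (intro power_mono) simp_all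
  then show ?thesis
    by (simp add: power_mult_distrib l2_sqnorm_def infsum_nonneg flip: power_mult)
qed

lemma has_sum_norm_sq_orthonormal:
  fixes \<psi> :: "'i \<Rightarrow> int \<Rightarrow> complex"
  assumes fin: "finite J" and on: "l2_orthonormal J \<psi>"
  shows "((\<lambda>m. (norm (\<Sum>j\<in>J. b j * \<psi> j m))^2) has_sum (\<Sum>j\<in>J. (norm (b j))^2)) UNIV"
proof -
  have l2: "\<And>j. j \<in> J \<Longrightarrow> in_l2 (\<psi> j)"
    and inner: "\<And>j k. j \<in> J \<Longrightarrow> k \<in> J \<Longrightarrow> l2_inner (\<psi> j) (\<psi> k) = (if j = k then 1 else 0)"
    using on unfolding l2_orthonormal_def by blast+
  have "((\<lambda>m. \<Sum>j\<in>J. \<Sum>k\<in>J. (b j * cnj (b k)) * (\<psi> j m * cnj (\<psi> k m)))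
      has_sum (\<Sum>j\<in>J. \<Sum>k\<in>J. (b j * cnj (b k)) * l2_inner (\<psi> j) (\<psi> k))) UNIV"
    by (intro has_sum_sum fin has_sum_cmult_right has_sum_l2_inner l2)
  also have "(\<Sum>j\<in>J. \<Sum>k\<in>J. (b j * cnj (b k)) * l2_inner (\<psi> j) (\<psi> k))
      = (\<Sum>j\<in>J. b j * cnj (b j))"
    using fin by (intro sum.cong refl) (simp add: inner if_distrib sum.delta cong: sum.cong if_cong)
  also have "\<dots> = complex_of_real (\<Sum>j\<in>J. (norm (b j))^2)"
    unfolding of_real_sum complex_norm_square ..
  finally have "((\<lambda>m. Re (\<Sum>j\<in>J. \<Sum>k\<in>J. (b j * cnj (b k)) * (\<psi> j m * cnj (\<psi> k m))))
      has_sum Re (complex_of_real (\<Sum>j\<in>J. (norm (b j))^2))) UNIV"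
    by (rule has_sum_Re)
  moreover have "(\<Sum>j\<in>J. \<Sum>k\<in>J. (b j * cnj (b k)) * (\<psi> j m * cnj (\<psi> k m)))
      = complex_of_real ((norm (\<Sum>j\<in>J. b j * \<psi> j m))^2)" for m
    unfolding complex_norm_square cnj_sum sum_product by (simp add: mult_ac)
  ultimately show ?thesis by simp
qed

lemma in_l2_projection_kernel:
  "finite J \<Longrightarrow> l2_orthonormal J \<psi> \<Longrightarrow> in_l2 (projection_kernel J \<psi> n)"
  unfolding projection_kernel_def[abs_def] l2_orthonormal_def
  by (rule in_l2_sum) (auto intro: in_l2_cmult)

lemma l2_sqnorm_projection_kernel:
  "finite J \<Longrightarrow> l2_orthonormal J \<psi> \<Longrightarrow> l2_sqnorm (projection_kernel J \<psi> n) = l2_density J \<psi> n"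
  using has_sum_norm_sq_orthonormal[of J \<psi> "\<lambda>j. cnj (\<psi> j n)"]
  unfolding l2_sqnorm_def projection_kernel_def l2_density_def by (simp add: infsumI)

lemma projection_kernel_diagonal:
  "projection_kernel J \<psi> n n = complex_of_real (l2_density J \<psi> n)"
  unfolding projection_kernel_def l2_density_def of_real_sum complex_norm_square by (simp add: mult.commute)

lemma l2_density_nonneg: "0 \<le> l2_density J \<psi> n"
  unfolding l2_density_def by (simp add: sum_nonneg)

text \<open>Agmon's inequality for \<open>G\<^sub>n\<close>, whose norm and value at \<open>n\<close> are both the density:
  \<open>\<rho>\<^sup>4 \<le> \<rho> \<parallel>D G\<^sub>n\<parallel>\<^sup>2\<close>.\<close>

lemma l2_density_cube_le:
  assumes "finite J" "l2_orthonormal J \<psi>"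
  shows "l2_density J \<psi> n ^ 3 \<le> l2_sqnorm (Dfwd (projection_kernel J \<psi> n))"
proof (cases "l2_density J \<psi> n = 0")
  case True
  then show ?thesis by (simp add: l2_sqnorm_def infsum_nonneg)
next
  case False
  then have pos: "0 < l2_density J \<psi> n" using l2_density_nonneg[of J \<psi> n] by linarith
  have "l2_density J \<psi> n * l2_density J \<psi> n ^ 3 \<le> l2_density J \<psi> n * l2_sqnorm (Dfwd (projection_kernel J \<psi> n))"
    using norm_pow4_le_l2_sqnorm_Dfwd[OF in_l2_projection_kernel[OF assms], of n n] pos
    by (simp add: projection_kernel_diagonal l2_sqnorm_projection_kernel[OF assms] power_Suc[symmetric]
        del: power_Suc)
  then show ?thesis using pos by simp
qed

lemma has_sum_Dfwd_projection_kernel: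
  assumes "finite J" "l2_orthonormal J \<psi>"
  shows "((\<lambda>n. (norm (Dfwd (projection_kernel J \<psi> n) m))^2)
    has_sum (\<Sum>j\<in>J. (norm (Dfwd (\<psi> j) m))^2)) UNIV"
proof -
  have "Dfwd (projection_kernel J \<psi> n) m = cnj (\<Sum>j\<in>J. cnj (Dfwd (\<psi> j) m) * \<psi> j n)" for n
    unfolding Dfwd_def projection_kernel_def
    by (simp add: sum_subtractf[symmetric] right_diff_distrib mult.commute)
  then have "norm (Dfwd (projection_kernel J \<psi> n) m) = norm (\<Sum>j\<in>J. cnj (Dfwd (\<psi> j) m) * \<psi> j n)" for n
    by (simp only: complex_mod_cnj)
  then show ?thesis
    using has_sum_norm_sq_orthonormal[OF assms, of "\<lambda>j. cnj (Dfwd (\<psi> j) m)"] by simp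
qed

lemma summable_on_le_iterated_infsum:
  fixes F :: "'a \<Rightarrow> 'b \<Rightarrow> real"
  assumes g_nonneg: "\<And>n. 0 \<le> g n" and g_le: "\<And>n. g n \<le> (\<Sum>\<^sub>\<infinity>m. F n m)"
    and F_nonneg: "\<And>n m. 0 \<le> F n m" and F_summable: "\<And>n. F n summable_on UNIV"
    and H: "\<And>m. ((\<lambda>n. F n m) has_sum H m) UNIV" and H_summable: "H summable_on UNIV"
  shows "g summable_on UNIV \<and> (\<Sum>\<^sub>\<infinity>n. g n) \<le> (\<Sum>\<^sub>\<infinity>m. H m)"
proof -
  have finite_sums: "(\<Sum>n\<in>S. g n) \<le> (\<Sum>\<^sub>\<infinity>m. H m)" if "finite S" for S
  proof -
    have "((\<lambda>m. \<Sum>n\<in>S. F n m) has_sum (\<Sum>n\<in>S. \<Sum>\<^sub>\<infinity>m. F n m)) UNIV"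
      using that F_summable by (intro has_sum_sum has_sum_infsum)
    moreover have "(H has_sum (\<Sum>\<^sub>\<infinity>m. H m)) UNIV"
      using H_summable by (rule has_sum_infsum)
    moreover have "(\<Sum>n\<in>S. F n m) \<le> H m" for m
      using that F_nonneg H by (intro finite_sum_le_has_sum) auto
    ultimately have "(\<Sum>n\<in>S. \<Sum>\<^sub>\<infinity>m. F n m) \<le> (\<Sum>\<^sub>\<infinity>m. H m)"
      by (rule has_sum_mono)
    moreover have "(\<Sum>n\<in>S. g n) \<le> (\<Sum>n\<in>S. \<Sum>\<^sub>\<infinity>m. F n m)"
      by (intro sum_mono g_le)
    ultimately show ?thesis by linarith
  qed
  have "g summable_on UNIV"
    using g_nonneg finite_sums by (intro nonneg_bdd_above_summable_on bdd_aboveI2) auto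
  with finite_sums show ?thesis by (auto intro: infsum_le_finite_sums)
qed

lemma l2_density_cube_summable_le:
  assumes "finite J" "l2_orthonormal J \<psi>"
  shows "(\<lambda>n. l2_density J \<psi> n ^ 3) summable_on UNIV
    \<and> (\<Sum>\<^sub>\<infinity>n. l2_density J \<psi> n ^ 3) \<le> (\<Sum>j\<in>J. l2_sqnorm (Dfwd (\<psi> j)))"
proof -
  have H: "((\<lambda>m. \<Sum>j\<in>J. (norm (Dfwd (\<psi> j) m))^2) has_sum (\<Sum>j\<in>J. l2_sqnorm (Dfwd (\<psi> j)))) UNIV"
    using assms in_l2_Dfwd unfolding l2_orthonormal_def l2_sqnorm_def in_l2_def
    by (intro has_sum_sum has_sum_infsum) auto
  have "(\<lambda>n. l2_density J \<psi> n ^ 3) summable_on UNIV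
    \<and> (\<Sum>\<^sub>\<infinity>n. l2_density J \<psi> n ^ 3) \<le> (\<Sum>\<^sub>\<infinity>m. \<Sum>j\<in>J. (norm (Dfwd (\<psi> j) m))^2)"
  proof (rule summable_on_le_iterated_infsum)
    show "l2_density J \<psi> n ^ 3 \<le> (\<Sum>\<^sub>\<infinity>m. (norm (Dfwd (projection_kernel J \<psi> n) m))^2)" for n
      using l2_density_cube_le[OF assms] unfolding l2_sqnorm_def .
    show "(\<lambda>m. (norm (Dfwd (projection_kernel J \<psi> n) m))^2) summable_on UNIV" for n
      using in_l2_Dfwd[OF in_l2_projection_kernel[OF assms]] unfolding in_l2_def .
    show "((\<lambda>n. (norm (Dfwd (projection_kernel J \<psi> n) m))^2) has_sum (\<Sum>j\<in>J. (norm (Dfwd (\<psi> j) m))^2)) UNIV" for m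
      by (rule has_sum_Dfwd_projection_kernel[OF assms])
  qed (use H l2_density_nonneg in \<open>auto simp: summable_on_def\<close>)
  with H show ?thesis by (simp add: infsumI)
qed

theorem lemma2p2:
  fixes \<psi> :: "nat \<Rightarrow> int \<Rightarrow> complex" and N :: nat
  assumes l2: "\<And>j. j \<in> {1..N} \<Longrightarrow> in_l2 (\<psi> j)"
    and orthonormal: "\<And>j k. j \<in> {1..N} \<Longrightarrow> k \<in> {1..N} \<Longrightarrow>
                l2_inner (\<psi> j) (\<psi> k) = (if j = k then 1 else 0)"
  shows "(\<lambda>n. (\<Sum>j=1..N. (norm (\<psi> j n))^2)^3) summable_on UNIV
     \<and> (\<Sum>\<^sub>\<infinity>n. (\<Sum>j=1..N. (norm (\<psi> j n))^2)^3)
         \<le> (\<Sum>j=1..N. \<Sum>\<^sub>\<infinity>n. (norm (Dfwd (\<psi> j) n))^2)"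
proof -
  have "l2_orthonormal {1..N} \<psi>"
    using l2 orthonormal unfolding l2_orthonormal_def by blast
  then show ?thesis
    using l2_density_cube_summable_le[of "{1..N}" \<psi>] unfolding l2_density_def l2_sqnorm_def by simp
qed

end
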